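(* Let $n$ be a positive even integer and let $a_1,\dots,a_n$ be positive integers. Let $1\le m\le n$ and write $m=2l+r_0$ with $r_0\in\{0,1\}$. For integers $i$ with $r_0\le i\le \frac{n-m+r_0}{2}$ define $$\Gamma_n(m,i)=\sum_{j=0}^{\min\{m-1,\,2i-r_0\}}(-1)^j\,\gamma_n(m-1-j)\,\gamma_{2i-r_0}(j).$$ Then $$\gamma_n(m)=\sum_{i=r_0}^{\frac{n-m+r_0}{2}}a_{2i+1-r_0}\,\Gamma_n(m,i).$$
   Context: For $k\ge1$ and $1\le l\le k$, $I_{k,l}$ is the set of strictly increasing sequences $(t_1,\dots,t_l)$ in $\{1,\dots,k\}$ with $t_i\equiv k+i-l\pmod2$ for all $i$. For $0\le k\le n$ and $1\le l\le k$ define $\gamma_k(l)=\sum_{(t_1,\dots,t_l)\in I_{k,l}}a_{t_1}\cdots a_{t_l}$. Set $\gamma_k(0)=1$ for all $k\ge0$, including $k=0$. *)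

theory Defs
  imports Main
begin

text \<open>I_{k,l}: strictly increasing sequences (t_1,...,t_l) in {1..k} with
  t_i = k + i - l (mod 2), represented as lists (0-based list index i
  corresponds to t_{i+1}).\<close>
definition I_set :: "nat \<Rightarrow> nat \<Rightarrow> nat list set" where
  "I_set k l = {ts. length ts = l \<and> sorted_wrt (<) ts \<and> set ts \<subseteq> {1..k} \<and>
      (\<forall>i<l. int (ts ! i) mod 2 = (int k + int (i + 1) - int l) mod 2)}"

definition gamma :: "(nat \<Rightarrow> int) \<Rightarrow> nat \<Rightarrow> nat \<Rightarrow> int" where
  "gamma a k l = (if l = 0 then 1 else (\<Sum>ts\<in>I_set k l. prod_list (map a ts)))"

definition Gamma :: "(nat \<Rightarrow> int) \<Rightarrow> nat \<Rightarrow> nat \<Rightarrow> nat \<Rightarrow> int" where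
  "Gamma a n m i = (\<Sum>j = 0..min (m - 1) (2 * i - m mod 2).
      (-1) ^ j * gamma a n (m - 1 - j) * gamma a (2 * i - m mod 2) j)"

end

theory Submission
  imports Defs "HOL-Computational_Algebra.Polynomial"
begin

text \<open>Let G_k(x) = \<Sum>_l \<gamma>_{k-1}(l) x^l, with G_0 = 1. Sorting the sequences in I_{k,l}
  by whether they end in k gives the continuant recursion G_{k+2} = a_{k+1} x G_{k+1} + G_k.
  Now \<Gamma>_n(m,i) is the coefficient of x^{m-1} in G_{n+1}(x) G_{2i-r_0+1}(-x), so the recursion
  in the second factor makes the sum telescope between the coefficients of x^m in
  G_{n+1}(x) G_K(-x) for K = r_0 \<le> 1, which is \<gamma>_n(m), and for K = n - m + 2. The latter
  vanishes: the coefficient of x^m in G_N(x) G_K(-x) is zero whenever m > |N - K| and N + K + m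
  is odd, by induction on N + K using the recursion in either factor, down to N, K \<le> 1 or to
  the linear coefficient of the even polynomial G_N(x) G_N(-x).\<close>

lemma mem_I_set_iff:
  "ts \<in> I_set k l \<longleftrightarrow> length ts = l \<and> sorted_wrt (<) ts \<and> set ts \<subseteq> {1..k} \<and>
     (\<forall>i<l. even (ts ! i + i + k + l + 1))"
proof -
  have "int t mod 2 = (int k + int (i + 1) - int l) mod 2 \<longleftrightarrow> even (t + i + k + l + 1)" for t i
    by presburger
  then show ?thesis by (simp add: I_set_def)
qed

lemma finite_I_set: "finite (I_set k l)"
proof (rule finite_subset)
  show "I_set k l \<subseteq> {ts. set ts \<subseteq> {1..k} \<and> length ts = l}"
    by (auto simp: I_set_def)
qed (simp add: finite_lists_length_eq)

lemma I_set_0 [simp]: "I_set k 0 = {[]}"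
  by (auto simp: I_set_def)

lemma I_set_eq_empty:
  assumes "k < l" shows "I_set k l = {}"
proof -
  have "l \<le> k" if "ts \<in> I_set k l" for ts
  proof -
    have "l = card (set ts)"
      using that by (auto simp: I_set_def strict_sorted_iff distinct_card)
    also have "\<dots> \<le> card {1..k}"
      using that by (intro card_mono) (auto simp: I_set_def)
    finally show ?thesis by simp
  qed
  with assms show ?thesis by fastforce
qed

lemma gamma_eq_sum: "gamma a k l = (\<Sum>ts\<in>I_set k l. prod_list (map a ts))"
  by (simp add: gamma_def)

lemma gamma_0_right [simp]: "gamma a k 0 = 1"
  by (simp add: gamma_def)

lemma gamma_eq_0: "k < l \<Longrightarrow> gamma a k l = 0"
  by (simp add: gamma_eq_sum I_set_eq_empty)

lemma I_set_Suc_Suc: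
  "I_set (Suc (Suc k)) (Suc l) = (\<lambda>ts. ts @ [Suc (Suc k)]) ` I_set (Suc k) l \<union> I_set k (Suc l)"
proof (intro equalityI subsetI)
  fix ts assume ts: "ts \<in> I_set (Suc (Suc k)) (Suc l)"
  then obtain xs y where ts_eq: "ts = xs @ [y]"
    by (cases ts rule: rev_cases) (auto simp: mem_I_set_iff)
  with ts have "even (y + k)" and "y \<le> Suc (Suc k)"
    by (auto simp: mem_I_set_iff nth_append dest!: spec[of _ l])
  show "ts \<in> (\<lambda>ts. ts @ [Suc (Suc k)]) ` I_set (Suc k) l \<union> I_set k (Suc l)"
  proof (cases "y = Suc (Suc k)")
    case True
    have "xs \<in> I_set (Suc k) l"
      unfolding mem_I_set_iff
    proof (intro conjI allI impI)
      fix i assume "i < l"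
      then show "even (xs ! i + i + Suc k + l + 1)"
        using ts ts_eq by (auto simp: mem_I_set_iff nth_append dest!: spec[of _ i])
    qed (use ts ts_eq True in \<open>auto simp: mem_I_set_iff sorted_wrt_append subset_iff\<close>)
    with True ts_eq show ?thesis by blast
  next
    case False
    with \<open>even (y + k)\<close> \<open>y \<le> Suc (Suc k)\<close> have "y \<le> k" by presburger
    have "ts \<in> I_set k (Suc l)"
      unfolding mem_I_set_iff
    proof (intro conjI allI impI)
      show "set ts \<subseteq> {1..k}"
        using ts ts_eq \<open>y \<le> k\<close> by (fastforce simp: mem_I_set_iff sorted_wrt_append)
      fix i assume "i < Suc l"
      then show "even (ts ! i + i + k + Suc l + 1)"
        using ts by (auto simp: mem_I_set_iff dest!: spec[of _ i])
    qed (use ts in \<open>auto simp: mem_I_set_iff\<close>)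
    then show ?thesis by blast
  qed
next
  fix ts assume "ts \<in> (\<lambda>ts. ts @ [Suc (Suc k)]) ` I_set (Suc k) l \<union> I_set k (Suc l)"
  then show "ts \<in> I_set (Suc (Suc k)) (Suc l)"
  proof
    assume "ts \<in> (\<lambda>ts. ts @ [Suc (Suc k)]) ` I_set (Suc k) l"
    then obtain xs where ts_eq: "ts = xs @ [Suc (Suc k)]" and xs: "xs \<in> I_set (Suc k) l"
      by blast
    show ?thesis
      unfolding mem_I_set_iff
    proof (intro conjI allI impI)
      fix i assume "i < Suc l"
      then show "even (ts ! i + i + Suc (Suc k) + Suc l + 1)"
        using xs ts_eq by (cases "i = l") (auto simp: mem_I_set_iff nth_append dest!: spec[of _ i])
    qed (use xs ts_eq in \<open>fastforce simp: mem_I_set_iff sorted_wrt_append\<close>)+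
  next
    assume "ts \<in> I_set k (Suc l)"
    then show ?thesis
      by (fastforce simp: mem_I_set_iff)
  qed
qed

lemma gamma_Suc_Suc:
  "gamma a (Suc (Suc k)) (Suc l) = a (Suc (Suc k)) * gamma a (Suc k) l + gamma a k (Suc l)"
proof -
  have disjoint: "(\<lambda>ts. ts @ [Suc (Suc k)]) ` I_set (Suc k) l \<inter> I_set k (Suc l) = {}"
    by (auto simp: mem_I_set_iff)
  have "gamma a (Suc (Suc k)) (Suc l) =
      (\<Sum>ts\<in>I_set (Suc k) l. prod_list (map a (ts @ [Suc (Suc k)]))) + gamma a k (Suc l)"
    unfolding gamma_eq_sum I_set_Suc_Suc
    by (subst sum.union_disjoint) (auto simp: finite_I_set disjoint sum.reindex inj_on_def)
  then show ?thesis
    by (simp add: gamma_eq_sum sum_distrib_left mult.commute)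
qed

lemma gamma_1_1: "gamma a (Suc 0) (Suc 0) = a (Suc 0)"
proof -
  have "I_set 1 1 = {[1]}"
    by (auto simp: I_set_def length_Suc_conv)
  then show ?thesis by (simp add: gamma_def)
qed

text \<open>\<open>gamma_poly a k\<close> is G_k; the shift by one lets the recursion start from
  G_0 = G_1 = 1. Replacing \<open>a\<close> by \<open>-a\<close> substitutes -x for x.\<close>
fun gamma_poly :: "(nat \<Rightarrow> int) \<Rightarrow> nat \<Rightarrow> int poly" where
  "gamma_poly a 0 = 1"
| "gamma_poly a (Suc 0) = 1"
| "gamma_poly a (Suc (Suc k)) = monom (a (Suc k)) 1 * gamma_poly a (Suc k) + gamma_poly a k"

declare gamma_poly.simps(3) [simp del]

lemma coeff_gamma_poly_Suc_Suc_mult: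
  "coeff (gamma_poly a (Suc (Suc k)) * p) (Suc m) =
     a (Suc k) * coeff (gamma_poly a (Suc k) * p) m + coeff (gamma_poly a k * p) (Suc m)"
  by (simp add: gamma_poly.simps(3) distrib_right mult.assoc coeff_monom_mult)

lemma coeff_mult_gamma_poly_Suc_Suc:
  "coeff (p * gamma_poly a (Suc (Suc k))) (Suc m) =
     a (Suc k) * coeff (p * gamma_poly a (Suc k)) m + coeff (p * gamma_poly a k) (Suc m)"
  using coeff_gamma_poly_Suc_Suc_mult[of a k p m] by (simp add: mult.commute)

lemma coeff_gamma_poly_Suc_Suc:
  "coeff (gamma_poly a (Suc (Suc k))) (Suc m) =
     a (Suc k) * coeff (gamma_poly a (Suc k)) m + coeff (gamma_poly a k) (Suc m)"
  using coeff_gamma_poly_Suc_Suc_mult[of a k 1 m] by simp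

lemma coeff_gamma_poly_0 [simp]: "coeff (gamma_poly a k) 0 = 1"
  by (induction a k rule: gamma_poly.induct) (simp_all add: gamma_poly.simps(3) coeff_monom_mult)

lemma coeff_gamma_poly_uminus:
  "coeff (gamma_poly (\<lambda>t. - a t) k) j = (-1) ^ j * coeff (gamma_poly a k) j"
proof (induction a k arbitrary: j rule: gamma_poly.induct)
  case (3 a k)
  show ?case
  proof (cases j)
    case (Suc j')
    then show ?thesis
      by (simp only: coeff_gamma_poly_Suc_Suc 3) (simp add: ring_distribs)
  qed simp
qed (simp_all add: of_bool_def)

lemma coeff_gamma_poly: "coeff (gamma_poly a (Suc k)) l = gamma a k l"
proof (induction k arbitrary: l rule: induct_nat_012)
  case 0
  then show ?case by (cases l) (simp_all add: gamma_eq_0)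
next
  case 1
  show ?case
  proof (cases l)
    case (Suc l')
    then show ?thesis
      by (cases l') (simp_all add: coeff_gamma_poly_Suc_Suc gamma_1_1 gamma_eq_0)
  qed simp
next
  case (ge2 k)
  then show ?case
    by (cases l) (simp_all add: coeff_gamma_poly_Suc_Suc gamma_Suc_Suc)
qed

lemma gamma_poly_eq_1: "k \<le> 1 \<Longrightarrow> gamma_poly a k = 1"
  by (cases k) simp_all

lemma coeff_gamma_poly_mult_gamma_poly_uminus:
  "coeff (gamma_poly a (Suc n) * gamma_poly (\<lambda>t. - a t) (Suc s)) L =
     (\<Sum>j = 0..min L s. (-1) ^ j * gamma a n (L - j) * gamma a s j)"
proof -
  have "coeff (gamma_poly a (Suc n) * gamma_poly (\<lambda>t. - a t) (Suc s)) L =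
      coeff (gamma_poly (\<lambda>t. - a t) (Suc s) * gamma_poly a (Suc n)) L"
    by (simp only: mult.commute)
  also have "\<dots> = (\<Sum>j\<le>L. (-1) ^ j * gamma a s j * gamma a n (L - j))"
    by (simp add: coeff_mult coeff_gamma_poly_uminus coeff_gamma_poly)
  also have "\<dots> = (\<Sum>j = 0..min L s. (-1) ^ j * gamma a n (L - j) * gamma a s j)"
    by (rule sum.mono_neutral_cong_right) (auto simp: gamma_eq_0)
  finally show ?thesis .
qed

lemma Gamma_eq_coeff:
  "0 < m \<Longrightarrow> Gamma a n m i =
     coeff (gamma_poly a (Suc n) * gamma_poly (\<lambda>t. - a t) (Suc (2 * i - m mod 2))) (m - 1)"
  by (simp add: Gamma_def coeff_gamma_poly_mult_gamma_poly_uminus)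

lemma coeff_gamma_poly_mult_gamma_poly_uminus_eq_0:
  assumes "0 < m" "N < K + m" "K < N + m" "odd (N + K + m)"
  shows "coeff (gamma_poly a N * gamma_poly (\<lambda>t. - a t) K) m = 0"
  using assms
proof (induction "N + K" arbitrary: N K m rule: less_induct)
  case less
  have "(2 \<le> N \<and> 2 \<le> m \<and> K + 3 \<le> N + m) \<or> (2 \<le> K \<and> 2 \<le> m \<and> N + 3 \<le> K + m) \<or>
      (N \<le> 1 \<and> K \<le> 1) \<or> (K = N \<and> m = 1)"
    using less.prems by presburger
  then consider (left) "2 \<le> N" "2 \<le> m" "K + 3 \<le> N + m" | (right) "2 \<le> K" "2 \<le> m" "N + 3 \<le> K + m"
    | (trivial) "N \<le> 1" "K \<le> 1" | (diagonal) "K = N" "m = 1"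
    by blast
  then show ?case
  proof cases
    case left
    then obtain N' m' where N: "N = Suc (Suc N')" and m: "m = Suc m'"
      by (cases N; cases "N - 1"; cases m) auto
    have "coeff (gamma_poly a (Suc N') * gamma_poly (\<lambda>t. - a t) K) m' = 0"
      by (rule less.hyps) (use left less.prems N m in auto)
    moreover have "coeff (gamma_poly a N' * gamma_poly (\<lambda>t. - a t) K) m = 0"
      by (rule less.hyps) (use left less.prems N m in auto)
    ultimately show ?thesis
      unfolding N m by (simp add: coeff_gamma_poly_Suc_Suc_mult)
  next
    case right
    then obtain K' m' where K: "K = Suc (Suc K')" and m: "m = Suc m'"
      by (cases K; cases "K - 1"; cases m) auto
    have "coeff (gamma_poly a N * gamma_poly (\<lambda>t. - a t) (Suc K')) m' = 0"
      by (rule less.hyps) (use right less.prems K m in auto)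
    moreover have "coeff (gamma_poly a N * gamma_poly (\<lambda>t. - a t) K') m = 0"
      by (rule less.hyps) (use right less.prems K m in auto)
    ultimately show ?thesis
      unfolding K m by (simp add: coeff_mult_gamma_poly_Suc_Suc)
  next
    case trivial
    then show ?thesis
      using less.prems by (simp add: gamma_poly_eq_1)
  next
    case diagonal
    then show ?thesis
      by (simp add: coeff_mult coeff_gamma_poly_uminus)
  qed
qed

theorem lemma3:
  fixes a :: "nat \<Rightarrow> int" and n m :: nat
  assumes "n > 0" and "even n"
    and "\<And>i. 1 \<le> i \<Longrightarrow> i \<le> n \<Longrightarrow> a i > 0"
    and "1 \<le> m" and "m \<le> n"
  shows "gamma a n m =
    (\<Sum>i = m mod 2 .. (n - m + m mod 2) div 2. a (2 * i + 1 - m mod 2) * Gamma a n m i)"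
proof -
  define r where "r = m mod 2"
  define M where "M = (n - m + r) div 2"
  define f where "f i = coeff (gamma_poly a (Suc n) * gamma_poly (\<lambda>t. - a t) (2 * i - r)) m" for i
  have telescoping: "a (2 * i + 1 - r) * Gamma a n m i = f i - f (Suc i)" if "r \<le> i" for i
  proof -
    define s where "s = 2 * i - r"
    have s: "2 * i + 1 - r = Suc s" "2 * Suc i - r = Suc (Suc s)"
      using that by (simp_all add: s_def)
    have "Gamma a n m i = coeff (gamma_poly a (Suc n) * gamma_poly (\<lambda>t. - a t) (Suc s)) (m - 1)"
      using Gamma_eq_coeff[of m a n i] assms(4) by (simp add: r_def[symmetric] s_def)
    moreover have "f (Suc i) = - a (Suc s) * Gamma a n m i + f i"
      using coeff_mult_gamma_poly_Suc_Suc[of "gamma_poly a (Suc n)" "\<lambda>t. - a t" s "m - 1"] assms(4)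
      unfolding f_def s s_def[symmetric] calculation by simp
    ultimately show ?thesis
      unfolding s(1) by simp
  qed
  have "(\<Sum>i = r..M. a (2 * i + 1 - r) * Gamma a n m i) = (\<Sum>i = r..M. f i - f (Suc i))"
    by (rule sum.cong[OF refl], rule telescoping) simp
  also have "\<dots> = f r - f (Suc M)"
    using sum_Suc_diff[of r M "\<lambda>i. - f i"] by (simp add: r_def)
  also have "f r = gamma a n m"
    by (simp add: f_def r_def gamma_poly_eq_1 coeff_gamma_poly)
  also have "f (Suc M) = 0"
  proof -
    have "2 * Suc M - r = n - m + 2"
      using assms(2,5) by (simp add: M_def r_def)
    then show ?thesis
      unfolding f_def using assms(4,5)
      by (simp add: coeff_gamma_poly_mult_gamma_poly_uminus_eq_0)
  qed
  finally show ?thesis by (simp add: r_def M_def)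
qed

end
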